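(* Let $u\in(\mathbb{N}\cup\{0\})^m$ and put $M:=\{x\in\mathbb{R}^m:0\leq x\leq u\}$ (entrywise order) with the metric induced by $\|\cdot\|_\infty$. Every optimal code $C$ in $(M,\|\cdot\|_\infty)$ of size $\prod_{i=1}^m(u_i+1)-1$ admits a decomposition $C=A\sqcup B$ for which there exists $i\in\{1,\ldots,m\}$ such that $|A|=\prod_{s=1}^m(u_s+1)-(u_i+1)$ and $|B|=u_i$, and furthermore $A\subseteq M\cap\mathbb{Z}^m$ and $B\subseteq\{x+te_i:t\in\mathbb{R}\}$ for some $x\in\mathbb{Z}^m$.
   Context: For a finite $C\subseteq M$, $\delta(C):=\min\{\|x-y\|_\infty:x,y\in C,x\neq y\}$. An optimal code of size $n$ is an $n$-element subset of $M$ maximizing $\delta$ among all $n$-element subsets. $e_i$ denotes the $i$th standard basis vector. *)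

theory Defs
  imports "HOL-Analysis.Analysis"
begin

text \<open>The sup-norm distance on real^'m (the library norm on real^'m is Euclidean).\<close>
definition dist_inf :: "real^'m \<Rightarrow> real^'m \<Rightarrow> real" where
  "dist_inf x y = Max (range (\<lambda>i. \<bar>x$i - y$i\<bar>))"

definition min_dist :: "(real^'m) set \<Rightarrow> real" where
  "min_dist C = Min {dist_inf x y | x y. x \<in> C \<and> y \<in> C \<and> x \<noteq> y}"

definition box_M :: "nat^'m \<Rightarrow> (real^'m) set" where
  "box_M u = {x. \<forall>i. 0 \<le> x$i \<and> x$i \<le> real (u$i)}"

definition int_points :: "(real^'m) set" where
  "int_points = {x. \<forall>i. x$i \<in> \<int>}"

definition optimal_code :: "(real^'m) set \<Rightarrow> nat \<Rightarrow> (real^'m) set \<Rightarrow> bool" where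
  "optimal_code M n C \<longleftrightarrow> C \<subseteq> M \<and> finite C \<and> card C = n \<and>
     (\<forall>D. D \<subseteq> M \<and> finite D \<and> card D = n \<longrightarrow> min_dist D \<le> min_dist C)"

end

theory Submission
  imports Defs
begin

text \<open>The \<open>N = \<Prod>i. u\<^sub>i + 1\<close> lattice points of the box are pairwise at distance at least 1,
  so an optimal code \<open>C\<close> of size \<open>N - 1\<close> is 1-separated. Hence, for every set \<open>T\<close> of
  coordinates, rounding down on \<open>T\<close> and up elsewhere maps \<open>C\<close> injectively into the lattice and
  misses exactly one lattice point \<open>q\<^sub>T\<close>. If \<open>x \<in> C\<close> has a non-integral \<open>l\<close>-th coordinate
  and \<open>l \<notin> T\<close>, then adding \<open>l\<close> to \<open>T\<close> moves the images of exactly such points one step down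
  along \<open>e\<^sub>l\<close>; following these steps from the image of \<open>x\<close> must end at \<open>q\<^sub>T\<close>, so that image
  lies on the line through \<open>q\<^sub>T\<close> in direction \<open>e\<^sub>l\<close>. Comparing \<open>T = {}\<close> with \<open>T = {j}\<close>
  shows that all non-integral coordinates of points of \<open>C\<close> occur in a single direction \<open>j\<close>, and
  that all non-lattice points of \<open>C\<close> lie on the line \<open>L\<close> through \<open>q\<^bsub>{}\<^esub>\<close> in direction \<open>e\<^sub>j\<close>.
  Since the lattice has \<open>u\<^sub>j + 1\<close> points on \<open>L\<close> and rounding maps \<open>C \<inter> L\<close> injectively to
  those other than \<open>q\<^bsub>{}\<^esub>\<close>, counting gives \<open>|C \<inter> L| = u\<^sub>j\<close> and
  \<open>|C - L| = N - (u\<^sub>j + 1)\<close>.\<close>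

lemma le_dist_inf_iff: "c \<le> dist_inf x y \<longleftrightarrow> (\<exists>i. c \<le> \<bar>x$i - y$i\<bar>)"
  unfolding dist_inf_def by (subst Max_ge_iff) auto

lemma one_le_dist_inf_int_points:
  assumes "x \<in> int_points" "y \<in> int_points" "x \<noteq> y"
  shows "1 \<le> dist_inf x y"
proof -
  obtain i where "x$i \<noteq> y$i" using \<open>x \<noteq> y\<close> by (auto simp: vec_eq_iff)
  moreover have "x$i - y$i \<in> \<int>" using assms by (simp add: int_points_def)
  ultimately have "1 \<le> \<bar>x$i - y$i\<bar>" by (intro Ints_nonzero_abs_ge1) auto
  then show ?thesis by (auto simp: le_dist_inf_iff)
qed

lemma min_dist_eq_Min_image:
  "min_dist C = Min ((\<lambda>(x, y). dist_inf x y) ` {(x, y) \<in> C \<times> C. x \<noteq> y})"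
  unfolding min_dist_def by (rule arg_cong[where f = Min]) auto

lemma finite_min_dist_set:
  "finite C \<Longrightarrow> finite ((\<lambda>(x, y). dist_inf x y) ` {(x, y) \<in> C \<times> C. x \<noteq> y})"
  by (rule finite_imageI, rule finite_subset[of _ "C \<times> C"]) auto

lemma min_dist_le_dist_inf:
  assumes "finite C" "x \<in> C" "y \<in> C" "x \<noteq> y"
  shows "min_dist C \<le> dist_inf x y"
  unfolding min_dist_eq_Min_image
  by (rule Min_le[OF finite_min_dist_set[OF assms(1)]]) (use assms(2-4) in force)

lemma le_min_dist:
  assumes "finite C" "x \<in> C" "y \<in> C" "x \<noteq> y"
    and "\<And>x y. x \<in> C \<Longrightarrow> y \<in> C \<Longrightarrow> x \<noteq> y \<Longrightarrow> c \<le> dist_inf x y"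
  shows "c \<le> min_dist C"
  unfolding min_dist_eq_Min_image using assms(2-5)
  by (subst Min_ge_iff[OF finite_min_dist_set[OF assms(1)]]) auto

definition axis_line :: "real^'m \<Rightarrow> 'm \<Rightarrow> (real^'m) set" where
  "axis_line x i = {x + t *\<^sub>R axis i 1 | t. True}"

lemma mem_axis_line_iff: "y \<in> axis_line x i \<longleftrightarrow> (\<forall>k. k \<noteq> i \<longrightarrow> y$k = x$k)"
proof
  assume "\<forall>k. k \<noteq> i \<longrightarrow> y$k = x$k"
  then have "y = x + (y$i - x$i) *\<^sub>R axis i 1" by (auto simp: vec_eq_iff axis_def)
  then show "y \<in> axis_line x i" unfolding axis_line_def by blast
qed (auto simp: axis_line_def axis_def)

lemma axis_line_inter_axis_line:
  assumes "i \<noteq> j"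
  shows "axis_line x i \<inter> axis_line x j = {x}"
proof (intro equalityI subsetI)
  fix y assume "y \<in> axis_line x i \<inter> axis_line x j"
  then have "y$k = x$k" for k using assms by (cases "k = i") (auto simp: mem_axis_line_iff)
  then show "y \<in> {x}" by (simp add: vec_eq_iff)
qed (simp add: mem_axis_line_iff)

lemma real_nat_floor_Ints: "a \<in> \<int> \<Longrightarrow> 0 \<le> a \<Longrightarrow> real (nat \<lfloor>a\<rfloor>) = a"
  by (auto elim: Ints_cases)

lemma nat_floor_le: "a \<le> real n \<Longrightarrow> nat \<lfloor>a\<rfloor> \<le> n"
  by linarith

lemma grid_eq_image_PiE:
  "box_M u \<inter> int_points = (\<lambda>g. \<chi> i. real (g i)) ` (\<Pi>\<^sub>E i\<in>UNIV. {..u$i})"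
proof (intro equalityI subsetI)
  fix y assume y: "y \<in> box_M u \<inter> int_points"
  define g where "g i = nat \<lfloor>y$i\<rfloor>" for i
  have "y = (\<chi> i. real (g i))"
    using y by (simp add: vec_eq_iff real_nat_floor_Ints box_M_def int_points_def g_def)
  moreover have "g i \<le> u$i" for i
    unfolding g_def using y by (intro nat_floor_le) (simp add: box_M_def)
  then have "g \<in> (\<Pi>\<^sub>E i\<in>UNIV. {..u$i})" by (simp add: PiE_iff)
  ultimately show "y \<in> (\<lambda>g. \<chi> i. real (g i)) ` (\<Pi>\<^sub>E i\<in>UNIV. {..u$i})" by (rule image_eqI)
qed (auto simp: box_M_def int_points_def)

lemma zero_in_grid: "0 \<in> box_M u \<inter> int_points"
  by (simp add: box_M_def int_points_def)

lemma finite_grid: "finite (box_M u \<inter> int_points)"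
  by (simp add: grid_eq_image_PiE finite_PiE)

lemma card_grid: "card (box_M u \<inter> int_points) = (\<Prod>i\<in>UNIV. u$i + 1)"
proof -
  have "inj_on (\<lambda>g. \<chi> i. real (g i)) (\<Pi>\<^sub>E i\<in>UNIV. {..u$i})"
    by (rule inj_onI) (auto simp: vec_eq_iff)
  then show ?thesis by (simp add: grid_eq_image_PiE card_image card_PiE)
qed

lemma grid_inter_axis_line_eq_image:
  assumes "p \<in> box_M u \<inter> int_points"
  shows "box_M u \<inter> int_points \<inter> axis_line p j = (\<lambda>k. \<chi> i. if i = j then real k else p$i) ` {..u$j}"
proof (intro equalityI subsetI)
  fix y assume y: "y \<in> box_M u \<inter> int_points \<inter> axis_line p j"
  define k where "k = nat \<lfloor>y$j\<rfloor>"
  have "y = (\<chi> i. if i = j then real k else p$i)"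
    using y by (simp add: vec_eq_iff real_nat_floor_Ints box_M_def int_points_def mem_axis_line_iff k_def)
  moreover have "k \<in> {..u$j}"
    unfolding k_def using y by (simp add: box_M_def nat_floor_le)
  ultimately show "y \<in> (\<lambda>k. \<chi> i. if i = j then real k else p$i) ` {..u$j}" by (rule image_eqI)
qed (use assms in \<open>auto simp: box_M_def int_points_def mem_axis_line_iff\<close>)

lemma card_grid_inter_axis_line:
  assumes "p \<in> box_M u \<inter> int_points"
  shows "card (box_M u \<inter> int_points \<inter> axis_line p j) = u$j + 1"
proof -
  have "inj_on (\<lambda>k. \<chi> i. if i = j then real k else p$i) {..u$j}"
    by (rule inj_onI) (auto simp: vec_eq_iff dest: spec[of _ j])
  then show ?thesis by (simp add: grid_inter_axis_line_eq_image[OF assms] card_image)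
qed

definition mixed_round :: "'m set \<Rightarrow> real^'m \<Rightarrow> real^'m" where
  "mixed_round T x = (\<chi> i. if i \<in> T then of_int \<lfloor>x$i\<rfloor> else of_int \<lceil>x$i\<rceil>)"

lemma mixed_round_nth_Ints: "x$i \<in> \<int> \<Longrightarrow> mixed_round T x $ i = x$i"
  by (auto simp: mixed_round_def elim: Ints_cases)

lemma mixed_round_eq_imp_dist_inf_less:
  assumes "mixed_round T x = mixed_round T y"
  shows "dist_inf x y < 1"
proof -
  have "\<bar>x$i - y$i\<bar> < 1" for i
  proof -
    have "mixed_round T x $ i = mixed_round T y $ i" using assms by simp
    then show ?thesis by (simp add: mixed_round_def split: if_splits) linarith+
  qed
  then show ?thesis by (meson le_dist_inf_iff not_le)
qed

lemma inj_on_mixed_round: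
  assumes "\<And>x y. x \<in> C \<Longrightarrow> y \<in> C \<Longrightarrow> x \<noteq> y \<Longrightarrow> 1 \<le> dist_inf x y"
  shows "inj_on (mixed_round T) C"
  using assms mixed_round_eq_imp_dist_inf_less by (force intro: inj_onI)

lemma mixed_round_in_grid:
  assumes "x \<in> box_M u"
  shows "mixed_round T x \<in> box_M u \<inter> int_points"
proof -
  have bounds: "0 \<le> x$i" "x$i \<le> real (u$i)" for i using assms by (auto simp: box_M_def)
  have "0 \<le> \<lfloor>x$i\<rfloor>" "real_of_int \<lfloor>x$i\<rfloor> \<le> real (u$i)"
    "0 \<le> \<lceil>x$i\<rceil>" "real_of_int \<lceil>x$i\<rceil> \<le> real (u$i)" for i
  proof -
    show "0 \<le> \<lfloor>x$i\<rfloor>" "0 \<le> \<lceil>x$i\<rceil>" using bounds(1)[of i] by auto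
    show "real_of_int \<lfloor>x$i\<rfloor> \<le> real (u$i)" using bounds(2)[of i] of_int_floor_le[of "x$i"] by linarith
    have "\<lceil>x$i\<rceil> \<le> int (u$i)" using bounds(2)[of i] by (simp add: ceiling_le_iff)
    then show "real_of_int \<lceil>x$i\<rceil> \<le> real (u$i)" by (metis of_int_le_iff of_int_of_nat_eq)
  qed
  then show ?thesis unfolding mixed_round_def box_M_def int_points_def by auto
qed

lemma mixed_round_insert:
  assumes "l \<notin> T"
  shows "mixed_round (insert l T) x =
    (if x$l \<notin> \<int> then mixed_round T x - axis l 1 else mixed_round T x)"
proof (cases "x$l \<in> \<int>")
  case True
  then show ?thesis
    using assms by (auto simp: vec_eq_iff mixed_round_def elim: Ints_cases)
next
  case False
  then have "\<lceil>x$l\<rceil> = \<lfloor>x$l\<rfloor> + 1" by (metis Ints_of_int ceiling_altdef)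
  then show ?thesis
    using assms False by (auto simp: vec_eq_iff mixed_round_def axis_def)
qed

text \<open>Walking down from \<open>R x\<close> through images of points of \<open>S\<close> must end at the missed point
  \<open>q\<close>: any other landing point \<open>R' x'\<close> would be the image \<open>R y = R' y\<close> of a point \<open>y \<notin> S\<close>,
  contradicting injectivity of \<open>R'\<close>.\<close>

lemma descent_to_missing_point:
  fixes R R' :: "real^'m \<Rightarrow> real^'m"
  assumes inj: "inj_on R' C" and image_R: "R ` C = G - {q}" and image_R': "R' ` C \<subseteq> G"
    and nonneg: "\<And>g. g \<in> G \<Longrightarrow> 0 \<le> g$l"
    and shifted: "\<And>x. x \<in> C \<Longrightarrow> R' x = (if x \<in> S then R x - axis l 1 else R x)"
    and x: "x \<in> C" "x \<in> S"
  shows "R x \<in> axis_line q l \<and> (\<exists>x'\<in>C \<inter> S. R x' = q + axis l 1)"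
proof -
  define P where "P k \<longleftrightarrow> (\<exists>x'\<in>C \<inter> S. R x' = R x - real k *\<^sub>R axis l 1)" for k
  have "\<not> P (nat \<lceil>R x $ l\<rceil> + 1)"
  proof
    assume "P (nat \<lceil>R x $ l\<rceil> + 1)"
    then obtain x' where "x' \<in> C" "R x' $ l = R x $ l - real (nat \<lceil>R x $ l\<rceil> + 1)"
      by (auto simp: P_def)
    moreover from \<open>x' \<in> C\<close> have "0 \<le> R x' $ l" using image_R nonneg by blast
    ultimately show False by linarith
  qed
  then obtain n where "\<not> P n" "\<And>m. m < n \<Longrightarrow> P m"
    using exists_least_iff[of "\<lambda>n. \<not> P n"] by blast
  moreover have "P 0" using x by (auto simp: P_def)
  ultimately obtain k where "P k" "\<not> P (Suc k)" by (cases n) auto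
  then obtain x' where x': "x' \<in> C" "x' \<in> S" "R x' = R x - real k *\<^sub>R axis l 1"
    by (auto simp: P_def)
  define w where "w = R x - real (Suc k) *\<^sub>R axis l 1"
  have step: "R x' - axis l 1 = w" using x'(3) by (simp add: w_def algebra_simps)
  with shifted x'(1,2) have R'x': "R' x' = w" by simp
  have "w = q"
  proof (rule ccontr)
    assume "w \<noteq> q"
    have "w \<in> G" using image_R' x'(1) R'x' by blast
    with \<open>w \<noteq> q\<close> have "w \<in> R ` C" using image_R by blast
    then obtain y where y: "y \<in> C" "R y = w" by blast
    with \<open>\<not> P (Suc k)\<close> have "y \<notin> S" unfolding P_def w_def by blast
    with shifted[OF y(1)] y(2) R'x' have "R' y = R' x'" by simp
    then have "y = x'" using inj_onD[OF inj _ y(1) x'(1)] by blast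
    with x'(2) \<open>y \<notin> S\<close> show False by simp
  qed
  then have Rx: "R x = q + real (Suc k) *\<^sub>R axis l 1" by (simp add: w_def diff_eq_eq)
  then have "R x \<in> axis_line q l" unfolding axis_line_def by blast
  moreover have "R x' = q + axis l 1" using step \<open>w = q\<close> by (simp add: diff_eq_eq)
  ultimately show ?thesis using x'(1,2) by blast
qed

locale deficient_grid_code =
  fixes u :: "nat^'m" and C :: "(real^'m) set"
  assumes code_subset: "C \<subseteq> box_M u" and finite_code: "finite C"
    and card_code: "card C = card (box_M u \<inter> int_points) - 1"
    and separated: "\<And>x y. x \<in> C \<Longrightarrow> y \<in> C \<Longrightarrow> x \<noteq> y \<Longrightarrow> 1 \<le> dist_inf x y"
begin

abbreviation grid :: "(real^'m) set" where
  "grid \<equiv> box_M u \<inter> int_points"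

definition missing :: "'m set \<Rightarrow> real^'m" where
  "missing T = the_elem (grid - mixed_round T ` C)"

lemma image_mixed_round_subset: "mixed_round T ` C \<subseteq> grid"
  using code_subset mixed_round_in_grid by blast

lemma inj_on_mixed_round_code: "inj_on (mixed_round T) C"
  using separated by (rule inj_on_mixed_round)

lemma grid_diff_image_mixed_round: "grid - mixed_round T ` C = {missing T}"
proof -
  have "card (mixed_round T ` C) = card grid - 1"
    using card_image[OF inj_on_mixed_round_code] card_code by simp
  moreover have "0 < card grid"
    using finite_grid zero_in_grid card_gt_0_iff by blast
  moreover have "card (grid - mixed_round T ` C) = card grid - card (mixed_round T ` C)"
    using finite_code image_mixed_round_subset by (intro card_Diff_subset) auto
  ultimately have "card (grid - mixed_round T ` C) = 1" by linarith
  then obtain q where "grid - mixed_round T ` C = {q}" by (rule card_1_singletonE)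
  then show ?thesis unfolding missing_def by simp
qed

lemma missing_in_grid: "missing T \<in> grid"
  using grid_diff_image_mixed_round by blast

lemma image_mixed_round: "mixed_round T ` C = grid - {missing T}"
  using grid_diff_image_mixed_round image_mixed_round_subset by blast

lemma mixed_round_ne_missing: "x \<in> C \<Longrightarrow> mixed_round T x \<noteq> missing T"
  using image_mixed_round[of T] by (metis Diff_iff imageI singletonI)

lemma mixed_round_nonint:
  assumes "l \<notin> T" "x \<in> C" "x$l \<notin> \<int>"
  shows "mixed_round T x \<in> axis_line (missing T) l"
    and "\<exists>x'\<in>C. x'$l \<notin> \<int> \<and> mixed_round T x' = missing T + axis l 1"
proof -
  have "mixed_round T x \<in> axis_line (missing T) l \<and>
    (\<exists>x'\<in>C \<inter> {x. x$l \<notin> \<int>}. mixed_round T x' = missing T + axis l 1)"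
  proof (rule descent_to_missing_point[where R' = "mixed_round (insert l T)" and G = grid])
    show "\<And>y. y \<in> C \<Longrightarrow> mixed_round (insert l T) y =
        (if y \<in> {x. x$l \<notin> \<int>} then mixed_round T y - axis l 1 else mixed_round T y)"
      using mixed_round_insert[OF \<open>l \<notin> T\<close>] by simp
  qed (use assms inj_on_mixed_round_code image_mixed_round image_mixed_round_subset in
    \<open>simp_all add: box_M_def\<close>)
  then show "mixed_round T x \<in> axis_line (missing T) l"
    and "\<exists>x'\<in>C. x'$l \<notin> \<int> \<and> mixed_round T x' = missing T + axis l 1"
    by auto
qed

lemma nonint_coord_unique:
  assumes "x \<in> C" "x$j \<notin> \<int>" "x$l \<notin> \<int>"
  shows "j = l"
proof (rule ccontr)
  assume "j \<noteq> l"
  have "mixed_round {} x \<in> axis_line (missing {}) j \<inter> axis_line (missing {}) l"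
    using mixed_round_nonint(1)[of j "{}" x] mixed_round_nonint(1)[of l "{}" x] assms by simp
  then have "mixed_round {} x = missing {}"
    using axis_line_inter_axis_line[OF \<open>j \<noteq> l\<close>] by blast
  with \<open>x \<in> C\<close> show False by (simp add: mixed_round_ne_missing)
qed

lemma nonint_point_on_axis_line:
  assumes "x \<in> C" "x$j \<notin> \<int>"
  shows "x \<in> axis_line (missing {}) j"
proof -
  have "x$k \<in> \<int>" if "k \<noteq> j" for k
    using nonint_coord_unique[OF assms] that by blast
  then have "x$k = mixed_round {} x $ k" if "k \<noteq> j" for k
    using that by (simp add: mixed_round_nth_Ints)
  moreover have "mixed_round {} x \<in> axis_line (missing {}) j"
    using mixed_round_nonint(1) assms by simp
  ultimately show ?thesis by (simp add: mem_axis_line_iff)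
qed

text \<open>If some point has a non-integral \<open>j\<close>-th coordinate, then \<open>missing {j}\<close> differs from
  \<open>missing {}\<close> only in coordinate \<open>j\<close>; a point with a non-integral \<open>l\<close>-th coordinate, \<open>l \<noteq> j\<close>,
  would force the two to agree in coordinate \<open>j\<close> as well.\<close>

lemma nonint_coords_same_axis:
  assumes y: "y \<in> C" "y$j \<notin> \<int>" and z: "z \<in> C" "z$l \<notin> \<int>"
  shows "j = l"
proof (rule ccontr)
  assume "j \<noteq> l"
  let ?p = "missing {}" and ?q = "missing {j}"
  obtain x' where x': "x' \<in> C" "x'$j \<notin> \<int>" "mixed_round {} x' = ?p + axis j 1"
    using mixed_round_nonint(2)[of j "{}" y] y by auto
  then have "mixed_round {j} x' = ?p" using mixed_round_insert[of j "{}" x'] by simp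
  then have "?q \<noteq> ?p" using mixed_round_ne_missing[OF \<open>x' \<in> C\<close>] by metis
  then have "?q \<in> mixed_round {} ` C"
    using missing_in_grid[of "{j}"] by (simp add: image_mixed_round)
  then obtain w where w: "w \<in> C" "?q = mixed_round {} w" by (rule imageE)
  have "w$j \<notin> \<int>"
  proof
    assume "w$j \<in> \<int>"
    then have "mixed_round {j} w = ?q" using w mixed_round_insert[of j "{}" w] by simp
    with \<open>w \<in> C\<close> show False by (simp add: mixed_round_ne_missing)
  qed
  then have q_on_line: "?q \<in> axis_line ?p j" using mixed_round_nonint(1)[of j "{}" w] w by simp
  have "z$j \<in> \<int>" using nonint_coord_unique[OF z(1) _ z(2)] \<open>j \<noteq> l\<close> by blast
  then have "mixed_round {j} z = mixed_round {} z" using mixed_round_insert[of j "{}" z] by simp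
  moreover have "mixed_round {j} z $ j = ?q $ j"
    using mixed_round_nonint(1)[of l "{j}" z] z \<open>j \<noteq> l\<close> by (simp add: mem_axis_line_iff)
  moreover have "mixed_round {} z $ j = ?p $ j"
    using mixed_round_nonint(1)[of l "{}" z] z \<open>j \<noteq> l\<close> by (simp add: mem_axis_line_iff)
  ultimately have "?q $ j = ?p $ j" by simp
  moreover have "?q $ k = ?p $ k" if "k \<noteq> j" for k
    using q_on_line that by (simp add: mem_axis_line_iff)
  ultimately have "?q = ?p" by (metis vec_eq_iff)
  with \<open>?q \<noteq> ?p\<close> show False by simp
qed

lemma common_nonint_axis:
  obtains j where "\<And>x i. x \<in> C \<Longrightarrow> x$i \<notin> \<int> \<Longrightarrow> i = j"
proof (cases "\<exists>x\<in>C. \<exists>i. x$i \<notin> \<int>")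
  case True
  then obtain x0 i0 where x0: "x0 \<in> C" "x0$i0 \<notin> \<int>" by blast
  show thesis
  proof (rule that)
    fix x i assume "x \<in> C" "x$i \<notin> \<int>"
    then show "i = i0" by (rule nonint_coords_same_axis[OF _ _ x0])
  qed
next
  case False
  then show thesis by (intro that) blast
qed

lemma card_code_inter_axis_line_le: "card (C \<inter> axis_line (missing {}) j) \<le> u$j"
proof -
  let ?p = "missing {}" and ?L = "axis_line (missing {}) j"
  have "mixed_round {} ` (C \<inter> ?L) \<subseteq> grid \<inter> ?L - {?p}"
  proof (intro subsetI, elim imageE)
    fix y x assume "y = mixed_round {} x" "x \<in> C \<inter> ?L"
    moreover have "?p $ k \<in> \<int>" for k using missing_in_grid by (simp add: int_points_def)
    ultimately have "y \<in> ?L" by (simp add: mem_axis_line_iff mixed_round_nth_Ints)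
    moreover have "y \<in> grid - {?p}" using image_mixed_round \<open>y = _\<close> \<open>x \<in> _\<close> by blast
    ultimately show "y \<in> grid \<inter> ?L - {?p}" by blast
  qed
  moreover have "inj_on (mixed_round {}) (C \<inter> ?L)"
    using inj_on_mixed_round_code by (rule inj_on_subset) blast
  ultimately have "card (C \<inter> ?L) \<le> card (grid \<inter> ?L - {?p})"
    using finite_grid by (intro card_inj_on_le) auto
  also have "\<dots> = u$j"
    using card_grid_inter_axis_line[OF missing_in_grid] missing_in_grid
    by (simp add: mem_axis_line_iff)
  finally show ?thesis .
qed

lemma card_code_diff_axis_line_le:
  assumes "x \<in> grid" "C - axis_line x j \<subseteq> grid"
  shows "card (C - axis_line x j) \<le> card grid - (u$j + 1)"
proof -
  have "card (C - axis_line x j) \<le> card (grid - axis_line x j)"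
    using assms finite_grid by (intro card_mono) auto
  also have "\<dots> = card grid - card (grid \<inter> axis_line x j)"
    using finite_Int[OF disjI1, OF finite_grid] by (rule card_Diff_subset_Int)
  also have "\<dots> = card grid - (u$j + 1)"
    using card_grid_inter_axis_line[OF assms(1)] by simp
  finally show ?thesis .
qed

lemma decomposition_along_axis_line:
  obtains x j where "x \<in> grid" "C - axis_line x j \<subseteq> grid"
    "card (C - axis_line x j) = card grid - (u$j + 1)" "card (C \<inter> axis_line x j) = u$j"
proof -
  obtain j where j: "\<And>x i. x \<in> C \<Longrightarrow> x$i \<notin> \<int> \<Longrightarrow> i = j"
    using common_nonint_axis by blast
  let ?L = "axis_line (missing {}) j"
  have off_line: "C - ?L \<subseteq> grid"
  proof
    fix x assume x: "x \<in> C - ?L"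
    then have "x$i \<in> \<int>" for i using j nonint_point_on_axis_line by blast
    with x show "x \<in> grid" using code_subset by (auto simp: int_points_def)
  qed
  have "card (grid \<inter> ?L) \<le> card grid" by (intro card_mono finite_grid Int_lower1)
  then have "u$j + 1 \<le> card grid"
    using card_grid_inter_axis_line[OF missing_in_grid[of "{}"], of j] by simp
  moreover have "card (C - ?L) + card (C \<inter> ?L) = card grid - 1"
    using card_Int_Diff[OF finite_code, of ?L] card_code by simp
  moreover note card_code_inter_axis_line_le[of j]
    card_code_diff_axis_line_le[OF missing_in_grid off_line]
  ultimately show thesis using that[OF missing_in_grid off_line] by linarith
qed

end

lemma optimal_code_separated:
  assumes "optimal_code (box_M u) (card (box_M u \<inter> int_points) - 1) C"
    and "x \<in> C" "y \<in> C" "x \<noteq> y"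
  shows "1 \<le> dist_inf x y"
proof -
  let ?G = "box_M u \<inter> int_points"
  define D where "D = ?G - {0}"
  have D: "D \<subseteq> box_M u" "finite D" "card D = card ?G - 1"
    using finite_grid[of u] zero_in_grid[of u] by (auto simp: D_def)
  with assms(1) have "min_dist D \<le> min_dist C" "finite C" "card C = card D"
    by (simp_all add: optimal_code_def)
  have "2 \<le> card C"
    using card_mono[OF \<open>finite C\<close>, of "{x, y}"] assms(2-4) by simp
  with \<open>card C = card D\<close> have "\<not> card D \<le> Suc 0" by simp
  then obtain a b where "a \<in> D" "b \<in> D" "a \<noteq> b"
    using card_le_Suc0_iff_eq[OF D(2)] by blast
  then have "1 \<le> min_dist D"
    by (rule le_min_dist[OF D(2)]) (auto simp: D_def intro: one_le_dist_inf_int_points)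
  also have "\<dots> \<le> min_dist C" by fact
  also have "\<dots> \<le> dist_inf x y" using \<open>finite C\<close> assms(2-4) by (rule min_dist_le_dist_inf)
  finally show ?thesis .
qed

lemma optimal_code_deficient_grid_code:
  assumes opt: "optimal_code (box_M u) (card (box_M u \<inter> int_points) - 1) C"
  shows "deficient_grid_code u C"
proof
  show "C \<subseteq> box_M u" "finite C" "card C = card (box_M u \<inter> int_points) - 1"
    using opt by (simp_all add: optimal_code_def)
  show "\<And>x y. x \<in> C \<Longrightarrow> y \<in> C \<Longrightarrow> x \<noteq> y \<Longrightarrow> 1 \<le> dist_inf x y"
    by (rule optimal_code_separated[OF opt])
qed

theorem theorem4p5:
  fixes u :: "nat^'m" and C :: "(real^'m) set"
  assumes "optimal_code (box_M u) ((\<Prod>i\<in>UNIV. u$i + 1) - 1) C"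
  shows "\<exists>A B i x. C = A \<union> B \<and> A \<inter> B = {} \<and>
           card A = (\<Prod>s\<in>UNIV. u$s + 1) - (u$i + 1) \<and> card B = u$i \<and>
           A \<subseteq> box_M u \<inter> int_points \<and>
           x \<in> int_points \<and> B \<subseteq> {x + t *\<^sub>R axis i 1 | t. True}"
proof -
  interpret deficient_grid_code u C
    using assms by (intro optimal_code_deficient_grid_code) (simp add: card_grid)
  obtain x j where x: "x \<in> box_M u \<inter> int_points"
    and off_line: "C - axis_line x j \<subseteq> box_M u \<inter> int_points"
    and cards: "card (C - axis_line x j) = card (box_M u \<inter> int_points) - (u$j + 1)"
      "card (C \<inter> axis_line x j) = u$j"
    by (rule decomposition_along_axis_line)
  have on_line: "C \<inter> axis_line x j \<subseteq> {x + t *\<^sub>R axis j 1 | t. True}"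
    unfolding axis_line_def by blast
  show ?thesis
    by (intro exI[of _ "C - axis_line x j"] exI[of _ "C \<inter> axis_line x j"] exI[of _ j] exI[of _ x]
        conjI) (use x off_line cards on_line in \<open>auto simp: card_grid\<close>)
qed

end
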